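(* Let $(G,* )$ be a Tychonoff $\aleph_0$-bounded topological group. Then every Rothberger bounded subset of $G$ is zero-dimensional.
   Context: A topological group $(G,* )$ is $\aleph_0$-bounded if for every open neighborhood $U$ of the identity there is a countable $C\subseteq G$ with $C*U=G$. A subset $X$ of $G$ is Rothberger bounded if for every sequence $(U_n:n<\omega)$ of open neighborhoods of the identity there are $g_n\in G$ with $X\subseteq\bigcup_n g_n*U_n$. *)

theory Defs
  imports "HOL-Analysis.Analysis"
begin

text \<open>Topological groups are rendered via the type class topological_group_add
(a group_add, not necessarily commutative, with continuous addition and inversion);
the group operation written * in the paper is + here, the identity is 0.\<close>

definition Tychonoff_space :: "'a topology \<Rightarrow> bool" where
  "Tychonoff_space X \<longleftrightarrow> t1_space X \<and> completely_regular_space X"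

definition aleph0_bounded :: "'a::topological_group_add set \<Rightarrow> bool" where
  "aleph0_bounded G \<longleftrightarrow> G = UNIV \<and>
     (\<forall>U::'a set. open U \<and> 0 \<in> U \<longrightarrow> (\<exists>C. countable C \<and> (\<Union>c\<in>C. (+) c ` U) = G))"

definition rothberger_bounded :: "'a::topological_group_add set \<Rightarrow> bool" where
  "rothberger_bounded X \<longleftrightarrow>
     (\<forall>U::nat \<Rightarrow> 'a set. (\<forall>n. open (U n) \<and> 0 \<in> U n) \<longrightarrow>
        (\<exists>g::nat \<Rightarrow> 'a. X \<subseteq> (\<Union>n. (+) (g n) ` U n)))"

end

theory Submission
  imports Defs
begin

text \<open>Shrink a neighbourhood W of x to a sequence of identity neighbourhoods V n with
V 0 = -x + W and V (n+1) + V (n+1) + V (n+1) \<subseteq> V n, and apply Rothberger boundedness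
to symmetric parts of the V (n+2): this covers X by translates B n whose differences lie
in V (n+1). Sets B n linked to x by a chain of overlapping B's with distinct indices stay
inside W, because a sum of elements of V's with distinct indices > k lies in V k (split the
sum at its smallest index). The union of these B's and the union of the other B's are
disjoint on X, so the former is a clopen neighbourhood of x in X.\<close>

lemma nhds_zero_sum2:
  fixes W :: "'a::topological_group_add set"
  assumes "open W" "0 \<in> W"
  obtains V where "open V" "0 \<in> V" "\<And>a b. a \<in> V \<Longrightarrow> b \<in> V \<Longrightarrow> a + b \<in> W"
proof -
  have "eventually (\<lambda>p. fst p + snd p \<in> W) (nhds (0::'a) \<times>\<^sub>F nhds 0)"
    using topological_tendstoD[OF tendsto_add_Pair[of "0::'a" 0] assms(1)] assms(2) by simp
  then obtain Q where Q: "eventually Q (nhds (0::'a))" "\<And>a b. Q a \<Longrightarrow> Q b \<Longrightarrow> a + b \<in> W"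
    by (subst (asm) eventually_prod_same) auto
  then obtain V where "open V" "0 \<in> V" "\<forall>a\<in>V. Q a"
    unfolding eventually_nhds by blast
  with Q(2) show thesis by (intro that) auto
qed

lemma nhds_zero_sum3:
  fixes W :: "'a::topological_group_add set"
  assumes "open W" "0 \<in> W"
  obtains V where "open V" "0 \<in> V"
    "\<And>a b c. a \<in> V \<Longrightarrow> b \<in> V \<Longrightarrow> c \<in> V \<Longrightarrow> a + b + c \<in> W"
proof -
  obtain V1 where V1: "open V1" "0 \<in> V1" "\<And>a b. a \<in> V1 \<Longrightarrow> b \<in> V1 \<Longrightarrow> a + b \<in> W"
    using nhds_zero_sum2[OF assms] by blast
  obtain V2 where V2: "open V2" "0 \<in> V2" "\<And>a b. a \<in> V2 \<Longrightarrow> b \<in> V2 \<Longrightarrow> a + b \<in> V1"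
    using nhds_zero_sum2[OF V1(1,2)] by blast
  show thesis
  proof (rule that[of "V2 \<inter> V1"])
    fix a b c assume "a \<in> V2 \<inter> V1" "b \<in> V2 \<inter> V1" "c \<in> V2 \<inter> V1"
    then show "a + b + c \<in> W" using V1(3) V2(3) by simp
  qed (use V1 V2 in auto)
qed

lemma shrinking_nhds_zero_sequence:
  fixes W :: "'a::topological_group_add set"
  assumes "open W" "0 \<in> W"
  obtains V :: "nat \<Rightarrow> 'a set" where "\<And>n. open (V n)" "\<And>n. 0 \<in> V n" "V 0 = W"
    "\<And>n a b c. a \<in> V (Suc n) \<Longrightarrow> b \<in> V (Suc n) \<Longrightarrow> c \<in> V (Suc n) \<Longrightarrow> a + b + c \<in> V n"
proof -
  define good where "good W V \<longleftrightarrow> open V \<and> (0::'a) \<in> V \<and>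
    (\<forall>a\<in>V. \<forall>b\<in>V. \<forall>c\<in>V. a + b + c \<in> W)" for W V
  have good_exists: "\<exists>V. good W V" if "open W" "0 \<in> W" for W
    using nhds_zero_sum3[OF that] unfolding good_def by metis
  define V where "V n = ((\<lambda>W. SOME V. good W V) ^^ n) W" for n
  have V_Suc: "V (Suc n) = (SOME V'. good (V n) V')" for n
    by (simp add: V_def)
  have V_nhds: "open (V n) \<and> 0 \<in> V n" for n
  proof (induction n)
    case (Suc n)
    then show ?case
      using someI_ex[OF good_exists[of "V n"]] unfolding V_Suc good_def by blast
  qed (simp add: V_def assms)
  have "good (V n) (V (Suc n))" for n
    using someI_ex[OF good_exists[of "V n"]] V_nhds unfolding V_Suc by blast
  then show thesis
    using V_nhds by (intro that[of V]) (auto simp: V_def good_def)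
qed

lemma sum_list_mem_of_distinct_indices:
  fixes V :: "nat \<Rightarrow> 'a::monoid_add set"
  assumes zero: "\<And>k. 0 \<in> V k"
    and sum3: "\<And>k a b c. a \<in> V (Suc k) \<Longrightarrow> b \<in> V (Suc k) \<Longrightarrow> c \<in> V (Suc k) \<Longrightarrow> a + b + c \<in> V k"
    and "distinct (map fst ps)" "\<forall>p\<in>set ps. n < fst p \<and> snd p \<in> V (fst p)"
  shows "sum_list (map snd ps) \<in> V n"
  using assms(3,4)
proof (induction "length ps" arbitrary: ps n rule: less_induct)
  case less
  have antimono: "V k \<subseteq> V n" if "n \<le> k" for k n
  proof (rule lift_Suc_antimono_le[of V, OF _ that])
    show "V (Suc k) \<subseteq> V k" for k
      using sum3[of _ k 0 0] zero by auto
  qed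
  show ?case
  proof (cases "ps = []")
    case False
    define m where "m = Min (fst ` set ps)"
    then have "m \<in> fst ` set ps" using False by simp
    then obtain v p1 p2 where ps: "ps = p1 @ (m, v) # p2"
      by (metis imageE prod.collapse split_list)
    have m_le: "m \<le> fst p" if "p \<in> set ps" for p
      unfolding m_def using that by simp
    have m_notin: "m \<notin> fst ` set p1 \<union> fst ` set p2"
      using less.prems(1) ps by auto
    have "n < m" "v \<in> V m"
      using less.prems(2) ps by auto
    then obtain k where k: "m = Suc k" "n \<le> k"
      by (cases m) auto
    have sums: "sum_list (map snd p) \<in> V m" if "p = p1 \<or> p = p2" for p
    proof (rule less.hyps)
      show "length p < length ps" "distinct (map fst p)"
        using that ps less.prems(1) by auto
      show "\<forall>q\<in>set p. m < fst q \<and> snd q \<in> V (fst q)"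
      proof
        fix q assume "q \<in> set p"
        then have "q \<in> set ps" "fst q \<noteq> m"
          using that ps m_notin by auto
        then show "m < fst q \<and> snd q \<in> V (fst q)"
          using m_le less.prems(2) by (auto simp: order.strict_iff_order)
      qed
    qed
    have "sum_list (map snd p1) \<in> V (Suc k)" "v \<in> V (Suc k)" "sum_list (map snd p2) \<in> V (Suc k)"
      using sums \<open>v \<in> V m\<close> k(1) by auto
    then have "sum_list (map snd p1) + v + sum_list (map snd p2) \<in> V k"
      by (rule sum3)
    then show ?thesis
      using ps antimono[OF \<open>n \<le> k\<close>] by (auto simp: add.assoc)
  qed (simp add: zero)
qed

lemma open_translation_group:
  fixes g :: "'a::topological_group_add"
  assumes "open U"
  shows "open ((+) g ` U)"
proof -
  have "(+) g ` U = (\<lambda>y. -g + y) -` U"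
    by (force simp: add.assoc[symmetric] image_iff intro: exI[of _ "-g + _"])
  moreover have "continuous_on UNIV (\<lambda>y. -g + y)"
    by (intro continuous_intros)
  ultimately show ?thesis
    using open_vimage[OF assms] by simp
qed

lemma open_negations_group:
  fixes U :: "'a::topological_group_add set"
  assumes "open U"
  shows "open (uminus -` U)"
  using open_vimage[OF assms continuous_on_minus[OF continuous_on_id]] by simp

inductive overlap_chain :: "(nat \<Rightarrow> 'a set) \<Rightarrow> 'a \<Rightarrow> nat list \<Rightarrow> bool" for B x where
  start: "x \<in> B n \<Longrightarrow> overlap_chain B x [n]"
| extend: "overlap_chain B x ns \<Longrightarrow> B (last ns) \<inter> B m \<noteq> {} \<Longrightarrow> overlap_chain B x (ns @ [m])"

lemma overlap_chain_take:
  "overlap_chain B x ns \<Longrightarrow> k < length ns \<Longrightarrow> overlap_chain B x (take (Suc k) ns)"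
proof (induction arbitrary: k rule: overlap_chain.induct)
  case (start n)
  then show ?case by (auto intro: overlap_chain.start)
next
  case (extend ns m)
  then show ?case
    by (cases "k < length ns") (auto intro: overlap_chain.extend)
qed

lemma overlap_chain_sum:
  fixes B V :: "nat \<Rightarrow> 'a::group_add set"
  assumes diff: "\<And>m y z. y \<in> B m \<Longrightarrow> z \<in> B m \<Longrightarrow> -y + z \<in> V (Suc m)"
    and "overlap_chain B x ns" "y \<in> B (last ns)"
  obtains ws where "length ws = length ns" "\<And>i. i < length ns \<Longrightarrow> ws ! i \<in> V (Suc (ns ! i))"
    "y = x + sum_list ws"
  using assms(2,3)
proof (induction arbitrary: y thesis rule: overlap_chain.induct)
  case (start n)
  then show ?case
    using diff[of x n y] by (intro start.prems(1)[of "[-x + y]"]) (auto simp: add.assoc[symmetric])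
next
  case (extend ns m)
  obtain b where b: "b \<in> B (last ns)" "b \<in> B m"
    using extend.hyps(2) by blast
  obtain ws where ws: "length ws = length ns" "\<And>i. i < length ns \<Longrightarrow> ws ! i \<in> V (Suc (ns ! i))"
    "b = x + sum_list ws"
    using extend.IH[OF _ b(1)] by blast
  have "y = b + (-b + y)"
    by (simp add: add.assoc[symmetric])
  then have "y = x + sum_list (ws @ [-b + y])"
    by (subst (asm) (1) ws(3)) (simp add: add.assoc)
  moreover have "i < length (ns @ [m]) \<Longrightarrow> (ws @ [-b + y]) ! i \<in> V (Suc ((ns @ [m]) ! i))" for i
    using ws diff[OF b(2) extend.prems(2)[simplified]]
    by (cases "i < length ns") (auto simp: nth_append less_Suc_eq)
  ultimately show ?case
    using ws(1) by (intro extend.prems(1)) auto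
qed

lemma overlap_chain_diff_mem:
  fixes B V :: "nat \<Rightarrow> 'a::group_add set"
  assumes zero: "\<And>k. 0 \<in> V k"
    and sum3: "\<And>k a b c. a \<in> V (Suc k) \<Longrightarrow> b \<in> V (Suc k) \<Longrightarrow> c \<in> V (Suc k) \<Longrightarrow> a + b + c \<in> V k"
    and diff: "\<And>m y z. y \<in> B m \<Longrightarrow> z \<in> B m \<Longrightarrow> -y + z \<in> V (Suc m)"
    and "overlap_chain B x ns" "distinct ns" "y \<in> B (last ns)"
  shows "-x + y \<in> V 0"
proof -
  obtain ws where ws: "length ws = length ns" "\<And>i. i < length ns \<Longrightarrow> ws ! i \<in> V (Suc (ns ! i))"
    "y = x + sum_list ws"
    using overlap_chain_sum[of B V, OF diff assms(4,6)] by blast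
  have "sum_list (map snd (zip (map Suc ns) ws)) \<in> V 0"
    using ws(1,2) \<open>distinct ns\<close>
    by (intro sum_list_mem_of_distinct_indices[OF zero sum3])
      (auto simp: distinct_map set_zip)
  then show ?thesis
    using ws by (simp add: add.assoc[symmetric])
qed

definition overlap_reachable :: "(nat \<Rightarrow> 'a set) \<Rightarrow> 'a \<Rightarrow> nat set" where
  "overlap_reachable B x = {n. \<exists>ns. overlap_chain B x ns \<and> distinct ns \<and> last ns = n}"

lemma overlap_reachable_start: "x \<in> B n \<Longrightarrow> n \<in> overlap_reachable B x"
  unfolding overlap_reachable_def using overlap_chain.start by fastforce

lemma overlap_reachable_extend:
  assumes "n \<in> overlap_reachable B x" "B n \<inter> B m \<noteq> {}"
  shows "m \<in> overlap_reachable B x"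
proof -
  obtain ns where ns: "overlap_chain B x ns" "distinct ns" "last ns = n"
    using assms(1) unfolding overlap_reachable_def by blast
  show ?thesis
  proof (cases "m \<in> set ns")
    case True
    then obtain k where k: "k < length ns" "ns ! k = m"
      by (auto simp: in_set_conv_nth)
    then have "last (take (Suc k) ns) = m"
      by (simp add: take_Suc_conv_app_nth)
    then show ?thesis
      unfolding overlap_reachable_def
      using overlap_chain_take[OF ns(1) k(1)] distinct_take[OF ns(2)] by blast
  next
    case False
    then show ?thesis
      unfolding overlap_reachable_def using overlap_chain.extend[OF ns(1)] ns assms(2)
      by (intro CollectI exI[of _ "ns @ [m]"]) auto
  qed
qed

lemma closedin_Union_overlap_closed:
  assumes "\<And>n. open (B n)" "X \<subseteq> (\<Union>n. B n)"
    and closed: "\<And>n m. n \<in> R \<Longrightarrow> B n \<inter> B m \<noteq> {} \<Longrightarrow> m \<in> R"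
  shows "closedin (top_of_set X) (X \<inter> \<Union>(B ` R))"
proof -
  have "X - X \<inter> \<Union>(B ` R) = X \<inter> \<Union>(B ` (- R))"
    using assms(2) closed by blast
  moreover have "open (\<Union>(B ` (- R)))"
    using assms(1) by blast
  ultimately show ?thesis
    by (auto simp: closedin_def openin_open)
qed

lemma rothberger_bounded_clopen_nhds:
  fixes X :: "'a::topological_group_add set"
  assumes "rothberger_bounded X" "open W" "x \<in> X" "x \<in> W"
  obtains K where "open K" "x \<in> K" "K \<subseteq> W" "closedin (top_of_set X) (X \<inter> K)"
proof -
  have "open ((+) x -` W)"
    using open_vimage[OF \<open>open W\<close>, of "(+) x"] by (simp add: continuous_on_add)
  moreover have "0 \<in> (+) x -` W"
    using \<open>x \<in> W\<close> by simp
  ultimately obtain V where V: "\<And>n. open (V n)" "\<And>n. 0 \<in> V n" "V 0 = (+) x -` W"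
    and sum3: "\<And>n a b c. a \<in> V (Suc n) \<Longrightarrow> b \<in> V (Suc n) \<Longrightarrow> c \<in> V (Suc n) \<Longrightarrow> a + b + c \<in> V n"
    by (rule shrinking_nhds_zero_sequence) blast
  define U where "U m = V (Suc (Suc m)) \<inter> uminus -` V (Suc (Suc m))" for m
  have U_open: "open (U m)" and U_zero: "0 \<in> U m" for m
    unfolding U_def using V(2) open_Int[OF V(1) open_negations_group[OF V(1)]] by auto
  have "\<exists>g. X \<subseteq> (\<Union>n. (+) (g n) ` U n)"
    using \<open>rothberger_bounded X\<close> U_open U_zero unfolding rothberger_bounded_def by simp
  then obtain g where cover: "X \<subseteq> (\<Union>n. (+) (g n) ` U n)"
    by blast
  define B where "B m = (+) (g m) ` U m" for m
  have diff: "-y + z \<in> V (Suc m)" if yz: "y \<in> B m" "z \<in> B m" for y z m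
  proof -
    obtain u u' where "u \<in> U m" "u' \<in> U m" "y = g m + u" "z = g m + u'"
      using yz unfolding B_def by blast
    then show ?thesis
      using sum3[of "-u" "Suc m" u' 0] V(2) by (simp add: U_def minus_add add.assoc[symmetric])
  qed
  have B_open: "open (B m)" for m
    unfolding B_def using U_open by (rule open_translation_group)
  define K where "K = \<Union>(B ` overlap_reachable B x)"
  show thesis
  proof
    show "open K"
      unfolding K_def using B_open by blast
    obtain m where "x \<in> B m"
      using cover \<open>x \<in> X\<close> unfolding B_def by blast
    then show "x \<in> K"
      unfolding K_def by (blast intro: overlap_reachable_start)
    show "K \<subseteq> W"
    proof
      fix y assume "y \<in> K"
      then obtain ns where "overlap_chain B x ns" "distinct ns" "y \<in> B (last ns)"
        unfolding K_def overlap_reachable_def by blast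
      then have "-x + y \<in> V 0"
        using overlap_chain_diff_mem[where B = B and V = V, OF V(2) sum3 diff] by blast
      then show "y \<in> W"
        using V(3) by (simp add: add.assoc[symmetric])
    qed
    show "closedin (top_of_set X) (X \<inter> K)"
      unfolding K_def
    proof (rule closedin_Union_overlap_closed)
      show "open (B n)" for n
        by (fact B_open)
      show "X \<subseteq> (\<Union>n. B n)"
        using cover by (simp add: B_def)
      show "m \<in> overlap_reachable B x" if "n \<in> overlap_reachable B x" "B n \<inter> B m \<noteq> {}" for n m
        using that by (rule overlap_reachable_extend)
    qed
  qed
qed

lemma rothberger_bounded_dim_le_0:
  fixes X :: "'a::topological_group_add set"
  assumes "rothberger_bounded X"
  shows "top_of_set X dim_le 0"
proof -
  have "neighbourhood_base_of (\<lambda>C. closedin (top_of_set X) C \<and> openin (top_of_set X) C)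
      (top_of_set X)"
  proof (subst open_neighbourhood_base_of)
    show "\<forall>C. closedin (top_of_set X) C \<and> openin (top_of_set X) C \<longrightarrow> openin (top_of_set X) C"
      by blast
    show "\<forall>W x. openin (top_of_set X) W \<and> x \<in> W \<longrightarrow>
      (\<exists>C. (closedin (top_of_set X) C \<and> openin (top_of_set X) C) \<and> x \<in> C \<and> C \<subseteq> W)"
    proof (intro allI impI, elim conjE)
      fix W x assume "openin (top_of_set X) W" "x \<in> W"
      then obtain W' where "open W'" "W = X \<inter> W'"
        by (auto simp: openin_open)
      then have "x \<in> X" "x \<in> W'"
        using \<open>x \<in> W\<close> by auto
      obtain K where "open K" "x \<in> K" "K \<subseteq> W'" "closedin (top_of_set X) (X \<inter> K)"
        by (rule rothberger_bounded_clopen_nhds[OF assms \<open>open W'\<close> \<open>x \<in> X\<close> \<open>x \<in> W'\<close>]) blast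
      moreover have "openin (top_of_set X) (X \<inter> K)"
        using \<open>open K\<close> by (auto simp: openin_open)
      ultimately show "\<exists>C. (closedin (top_of_set X) C \<and> openin (top_of_set X) C) \<and> x \<in> C \<and> C \<subseteq> W"
        using \<open>x \<in> X\<close> \<open>W = X \<inter> W'\<close> by blast
    qed
  qed
  then show ?thesis
    by (simp add: dimension_le_0_neighbourhood_base_of_clopen)
qed

theorem proposition3:
  fixes X :: "'a::topological_group_add set"
  assumes "Tychonoff_space (euclidean :: 'a topology)"
    and "aleph0_bounded (UNIV :: 'a set)"
    and "rothberger_bounded X"
  shows "subtopology euclidean X dim_le 0"
  using assms(3) by (rule rothberger_bounded_dim_le_0)

end
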